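(* Let $B$ be a blueprint with a zero $0$. Then a subset $I\subseteq B$ is an ideal of $B$ if and only if: (1) $ab\in I$ for all $a\in I$, $b\in B$; (2) $0\in I$; and (3) whenever $a+\sum_j b_j\equiv\sum_k c_k$ with $a\in B$ and all $b_j,c_k\in I$, then $a\in I$.
   Context: A monoid is a commutative semigroup $A$, written multiplicatively, with neutral element $1$. For a monoid $A$, $\mathbb N[A]$ denotes the semiring of finite formal sums $\sum a_i$ of elements $a_i\in A$ (repetitions allowed), with empty sum $\underline0$ and multiplication extended bilinearly from $A$. A pre-addition on $A$ is a relation $\mathcal R\subseteq\mathbb N[A]\times\mathbb N[A]$, written $\sum a_i\equiv\sum b_j$, which is an equivalence relation and satisfies: if $\sum a_i\equiv\sum b_j$ and $\sum c_k\equiv\sum d_l$, then $\sum a_i+\sum c_k\equiv\sum b_j+\sum d_l$ and $\sum_{i,k}a_ic_k\equiv\sum_{j,l}b_jd_l$. A blueprint $B=(A,\mathcal R)$ is a monoid $A$ with a pre-addition $\mathcal R$; we write $a\in B$ for $a\in A$. An element $e$ with $e\equiv\underline0$ is a zero of $B$. For an equivalence relation $\sim$ on $A$, its linear extension $\sim_{\mathbb N}$ is the equivalence relation on $\mathbb N[A]$ generated by $\sum_{i=1}^n a_i\sim_{\mathbb N}\sum_{i=1}^n b_i$ whenever $a_i\sim b_i$ for all $i$. For a subset $I\subseteq B$, let $\sim^I$ be the equivalence relation on $A$ with $a\sim^I b$ iff $a=b$ or $a,b\in I$, and let $\sim_I$ be the relation on $A$ with $a\sim_I b$ iff there is a finite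 sequence $a\equiv\sum_k c_{1,k}\sim^I_{\mathbb N}\sum_k d_{1,k}\equiv\sum_k c_{2,k}\sim^I_{\mathbb N}\cdots\sim^I_{\mathbb N}\sum_k d_{n,k}\equiv b$ with $c_{i,k},d_{i,k}\in A$. An ideal of $B$ is a subset $I\subseteq B$ such that (I1) $ab\in I$ for all $a\in I$, $b\in B$; (I2) every zero of $B$ lies in $I$; (I3) if $a\sim_I b$ and $b\in I$, then $a\in I$. *)

theory Defs
  imports Main "HOL-Library.Multiset"
begin

text \<open>The monoid A is modelled as a type 'a of class comm_monoid_mult.
  N[A] is modelled as 'a multiset (finite formal sums, with repetitions);
  the empty sum is the empty multiset, sums are multiset sums.\<close>

definition nmult :: "'a::comm_monoid_mult multiset \<Rightarrow> 'a multiset \<Rightarrow> 'a multiset" where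
  "nmult M N = sum_mset (image_mset (\<lambda>a. image_mset (\<lambda>c. a * c) N) M)"

definition pre_addition :: "('a::comm_monoid_mult multiset \<Rightarrow> 'a multiset \<Rightarrow> bool) \<Rightarrow> bool" where
  "pre_addition R \<longleftrightarrow> equivp R \<and>
     (\<forall>A B C D. R A B \<longrightarrow> R C D \<longrightarrow> R (A + C) (B + D) \<and> R (nmult A C) (nmult B D))"

text \<open>A blueprint is a monoid (the type 'a) together with a pre-addition R.\<close>
abbreviation blueprint :: "('a::comm_monoid_mult multiset \<Rightarrow> 'a multiset \<Rightarrow> bool) \<Rightarrow> bool" where
  "blueprint R \<equiv> pre_addition R"

definition is_zero :: "('a::comm_monoid_mult multiset \<Rightarrow> 'a multiset \<Rightarrow> bool) \<Rightarrow> 'a \<Rightarrow> bool" where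
  "is_zero R e \<longleftrightarrow> R {#e#} {#}"

definition simI :: "'a set \<Rightarrow> 'a \<Rightarrow> 'a \<Rightarrow> bool" where
  "simI I a b \<longleftrightarrow> a = b \<or> (a \<in> I \<and> b \<in> I)"

definition lin_ext :: "('a \<Rightarrow> 'a \<Rightarrow> bool) \<Rightarrow> 'a multiset \<Rightarrow> 'a multiset \<Rightarrow> bool" where
  "lin_ext r = equivclp (rel_mset r)"

text \<open>a ~_I b iff a = C1 ~ D1 = C2 ~ ... ~ Dn = b (\<equiv> steps via R, ~ steps via lin_ext).\<close>
definition sim_sub :: "('a::comm_monoid_mult multiset \<Rightarrow> 'a multiset \<Rightarrow> bool) \<Rightarrow> 'a set \<Rightarrow> 'a \<Rightarrow> 'a \<Rightarrow> bool" where
  "sim_sub R I a b \<longleftrightarrow> ((R OO lin_ext (simI I))\<^sup>+\<^sup>+ OO R) {#a#} {#b#}"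

definition is_ideal :: "('a::comm_monoid_mult multiset \<Rightarrow> 'a multiset \<Rightarrow> bool) \<Rightarrow> 'a set \<Rightarrow> bool" where
  "is_ideal R I \<longleftrightarrow>
     (\<forall>a\<in>I. \<forall>b. a * b \<in> I) \<and>
     (\<forall>e. is_zero R e \<longrightarrow> e \<in> I) \<and>
     (\<forall>a b. sim_sub R I a b \<longrightarrow> b \<in> I \<longrightarrow> a \<in> I)"

end

theory Submission
  imports Defs
begin

(* Call a formal sum X "absorbed" by I if X + \<Sum>b_j \<equiv> \<Sum>c_k for some b_j, c_k in I.
   Condition (3) of the theorem says exactly: if the single term a is absorbed, then a \<in> I.
   The proof compares absorption with the relation ~_I:

   - Absorption is closed backwards under \<equiv> and under the linear extension of ~^I
     (an ~^I-step only trades elements of I on both sides), hence along every chain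
     defining ~_I; so a ~_I b with b \<in> I makes a absorbed (lemma sim_sub_absorbed).
   - Conversely, if a + \<Sum>b_j \<equiv> \<Sum>c_k with b_j, c_k \<in> I and the zero z lies in I, then
     a \<equiv> a + n\<cdot>z ~ a + \<Sum>b_j \<equiv> \<Sum>c_k ~ m\<cdot>z \<equiv> z, so a ~_I z (lemma absorbed_sim_sub_zero).

   Hence, given (I1) and z \<in> I, axiom (I3) is equivalent to (3); and (3) implies (I2)
   because every zero e is absorbed (e + 0 \<equiv> 0). *)

lemma pre_addition_refl: "pre_addition R \<Longrightarrow> R A A"
  unfolding pre_addition_def by (blast intro: equivp_reflp)

lemma pre_addition_sym: "pre_addition R \<Longrightarrow> R A B \<Longrightarrow> R B A"
  unfolding pre_addition_def by (blast intro: equivp_symp)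

lemma pre_addition_trans: "pre_addition R \<Longrightarrow> R A B \<Longrightarrow> R B C \<Longrightarrow> R A C"
  unfolding pre_addition_def by (blast intro: equivp_transp)

lemma pre_addition_add: "pre_addition R \<Longrightarrow> R A B \<Longrightarrow> R C D \<Longrightarrow> R (A + C) (B + D)"
  unfolding pre_addition_def by blast

lemma pre_addition_add_right: "pre_addition R \<Longrightarrow> R A B \<Longrightarrow> R (A + C) (B + C)"
  by (blast intro: pre_addition_add pre_addition_refl)

lemma replicate_zero_equiv_empty:
  assumes "pre_addition R" and "is_zero R z"
  shows "R (replicate_mset n z) {#}"
proof (induction n)
  case 0
  show ?case using pre_addition_refl[OF assms(1)] by simp
next
  case (Suc n)
  have "R ({#z#} + replicate_mset n z) ({#} + {#})"
    using pre_addition_add[OF assms(1)] assms(2) Suc unfolding is_zero_def by blast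
  then show ?case by simp
qed

lemma rel_mset_imp_lin_ext: "rel_mset r X Y \<Longrightarrow> lin_ext r X Y"
  unfolding lin_ext_def by (rule r_into_equivclp)

lemma rel_mset_simI_exchange:
  assumes "rel_mset (simI I) X Y"
  shows "\<exists>XI YI. set_mset XI \<subseteq> I \<and> set_mset YI \<subseteq> I \<and> X + YI = Y + XI"
  using assms
proof (induction "simI I" X Y rule: rel_mset_induct)
  case empty
  show ?case by (intro exI[of _ "{#}"]) auto
next
  case (add a b M N)
  then obtain XI YI where ex: "set_mset XI \<subseteq> I" "set_mset YI \<subseteq> I" "M + YI = N + XI"
    by blast
  show ?case
  proof (cases "a = b")
    case True
    then show ?thesis using ex by auto
  next
    case False
    then have "a \<in> I" "b \<in> I" using add.hyps(1) by (auto simp: simI_def)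
    then show ?thesis using ex
      by (intro exI[of _ "add_mset a XI"] exI[of _ "add_mset b YI"]) auto
  qed
qed

lemma rel_mset_simI_replicate:
  assumes "set_mset Bs \<subseteq> I" and "z \<in> I"
  shows "rel_mset (simI I) (replicate_mset (size Bs) z) Bs"
  using assms
proof (induction Bs)
  case empty
  show ?case by (simp add: rel_mset_Zero)
next
  case (add x Bs)
  then show ?case by (auto intro!: rel_mset_Plus simp: simI_def)
qed

definition absorbed :: "('a::comm_monoid_mult multiset \<Rightarrow> 'a multiset \<Rightarrow> bool) \<Rightarrow> 'a set \<Rightarrow> 'a multiset \<Rightarrow> bool" where
  "absorbed R I X \<longleftrightarrow> (\<exists>Bs Cs. set_mset Bs \<subseteq> I \<and> set_mset Cs \<subseteq> I \<and> R (X + Bs) Cs)"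

lemma absorbed_R_backward:
  assumes "pre_addition R" "R X Y" "absorbed R I Y"
  shows "absorbed R I X"
proof -
  obtain Bs Cs where BC: "set_mset Bs \<subseteq> I" "set_mset Cs \<subseteq> I" "R (Y + Bs) Cs"
    using assms(3) by (auto simp: absorbed_def)
  have "R (X + Bs) (Y + Bs)" using pre_addition_add_right[OF assms(1,2)] .
  then have "R (X + Bs) Cs" using pre_addition_trans[OF assms(1)] BC(3) by blast
  then show ?thesis using BC unfolding absorbed_def by blast
qed

text \<open>An elementwise \<open>\<sim>\<^sup>I\<close>-step (in either direction) preserves absorption: the elements of I
  it trades are moved to the I-sides of the absorbing equation.\<close>
lemma absorbed_rel_mset_backward:
  assumes "pre_addition R" "rel_mset (simI I) X Y \<or> rel_mset (simI I) Y X" "absorbed R I Y"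
  shows "absorbed R I X"
proof -
  obtain XI YI where ex: "set_mset XI \<subseteq> I" "set_mset YI \<subseteq> I" "X + YI = Y + XI"
    using assms(2) rel_mset_simI_exchange[of I X Y] rel_mset_simI_exchange[of I Y X] by metis
  obtain Bs Cs where BC: "set_mset Bs \<subseteq> I" "set_mset Cs \<subseteq> I" "R (Y + Bs) Cs"
    using assms(3) by (auto simp: absorbed_def)
  have "R (Y + Bs + XI) (Cs + XI)" using pre_addition_add_right[OF assms(1) BC(3)] .
  moreover have "Y + Bs + XI = X + (YI + Bs)" using ex(3) by (simp add: add_ac)
  ultimately have "R (X + (YI + Bs)) (Cs + XI)" by simp
  then show ?thesis using BC ex unfolding absorbed_def
    by (intro exI[of _ "YI + Bs"] exI[of _ "Cs + XI"]) auto
qed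

lemma absorbed_lin_ext_backward:
  assumes "pre_addition R" "lin_ext (simI I) X Y" "absorbed R I Y"
  shows "absorbed R I X"
proof -
  have "equivclp (rel_mset (simI I)) Y X"
    using assms(2) unfolding lin_ext_def by (rule equivclp_sym)
  then show ?thesis
  proof (induction rule: equivclp_induct)
    case base
    show ?case using assms(3) .
  next
    case (step U V)
    then show ?case using absorbed_rel_mset_backward[OF assms(1), of I V U] by blast
  qed
qed

lemma absorbed_chain_backward:
  assumes "pre_addition R" "(R OO lin_ext (simI I))\<^sup>+\<^sup>+ X Y" "absorbed R I Y"
  shows "absorbed R I X"
  using assms(2,3)
proof (induction rule: converse_tranclp_induct)
  case (base X)
  then show ?case
    using absorbed_R_backward[OF assms(1)] absorbed_lin_ext_backward[OF assms(1)] by blast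
next
  case (step X U)
  then show ?case
    using absorbed_R_backward[OF assms(1)] absorbed_lin_ext_backward[OF assms(1)] by blast
qed

lemma sim_sub_absorbed:
  assumes "pre_addition R" "sim_sub R I a b" "b \<in> I"
  shows "absorbed R I {#a#}"
proof -
  obtain Y where chain: "(R OO lin_ext (simI I))\<^sup>+\<^sup>+ {#a#} Y" and last: "R Y {#b#}"
    using assms(2) unfolding sim_sub_def by blast
  have "absorbed R I {#b#}" unfolding absorbed_def using assms(3) pre_addition_refl[OF assms(1)]
    by (intro exI[of _ "{#}"] exI[of _ "{#b#}"]) auto
  then have "absorbed R I Y" using absorbed_R_backward[OF assms(1) last] by blast
  then show ?thesis using absorbed_chain_backward[OF assms(1) chain] by blast
qed

text \<open>Conversely, if a is absorbed and I contains a zero z, then a ~_I z, via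
  a \<equiv> a + n z \<sim> a + \<Sum>b_j \<equiv> \<Sum>c_k \<sim> m z \<equiv> z.\<close>
lemma absorbed_sim_sub_zero:
  assumes R: "pre_addition R" and zero: "is_zero R z" and "z \<in> I"
    and "absorbed R I {#a#}"
  shows "sim_sub R I a z"
proof -
  obtain Bs Cs where BC: "set_mset Bs \<subseteq> I" "set_mset Cs \<subseteq> I" "R ({#a#} + Bs) Cs"
    using assms(4) by (auto simp: absorbed_def)
  let ?n = "size Bs" and ?m = "size Cs"
  have "R ({#a#} + replicate_mset ?n z) ({#a#} + {#})"
    using pre_addition_add[OF R pre_addition_refl[OF R] replicate_zero_equiv_empty[OF R zero]] .
  then have pad: "R {#a#} ({#a#} + replicate_mset ?n z)"
    using pre_addition_sym[OF R] by simp
  have fill: "lin_ext (simI I) ({#a#} + replicate_mset ?n z) ({#a#} + Bs)"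
    using rel_mset_simI_replicate[OF BC(1) \<open>z \<in> I\<close>]
    by (auto intro!: rel_mset_imp_lin_ext rel_mset_Plus simp: simI_def)
  have drain: "lin_ext (simI I) Cs (replicate_mset ?m z)"
    using rel_mset_imp_lin_ext[OF rel_mset_simI_replicate[OF BC(2) \<open>z \<in> I\<close>]]
    unfolding lin_ext_def by (rule equivclp_sym)
  have collapse: "R (replicate_mset ?m z) {#z#}"
    using pre_addition_trans[OF R replicate_zero_equiv_empty[OF R zero]]
      pre_addition_sym[OF R] zero unfolding is_zero_def by blast
  have "(R OO lin_ext (simI I))\<^sup>+\<^sup>+ {#a#} ({#a#} + Bs)" using pad fill by blast
  moreover have "(R OO lin_ext (simI I)) ({#a#} + Bs) (replicate_mset ?m z)"
    using BC(3) drain by blast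
  ultimately have "(R OO lin_ext (simI I))\<^sup>+\<^sup>+ {#a#} (replicate_mset ?m z)" by simp
  then show ?thesis unfolding sim_sub_def using collapse by blast
qed

lemma zero_absorbed: "is_zero R e \<Longrightarrow> absorbed R I {#e#}"
  unfolding absorbed_def is_zero_def by (intro exI[of _ "{#}"]) auto

theorem mainTheorem11:
  fixes R :: "'a::comm_monoid_mult multiset \<Rightarrow> 'a multiset \<Rightarrow> bool"
    and z :: 'a and I :: "'a set"
  assumes "blueprint R"
    and "is_zero R z"
  shows "is_ideal R I \<longleftrightarrow>
    (\<forall>a\<in>I. \<forall>b. a * b \<in> I) \<and>
    z \<in> I \<and>
    (\<forall>a Bs Cs. set_mset Bs \<subseteq> I \<longrightarrow> set_mset Cs \<subseteq> I \<longrightarrow> R ({#a#} + Bs) Cs \<longrightarrow> a \<in> I)"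
proof -
  have cond3_iff: "(\<forall>a Bs Cs. set_mset Bs \<subseteq> I \<longrightarrow> set_mset Cs \<subseteq> I \<longrightarrow> R ({#a#} + Bs) Cs \<longrightarrow> a \<in> I)
      \<longleftrightarrow> (\<forall>a. absorbed R I {#a#} \<longrightarrow> a \<in> I)"
    unfolding absorbed_def by auto
  have I3_iff: "(\<forall>a b. sim_sub R I a b \<longrightarrow> b \<in> I \<longrightarrow> a \<in> I) \<longleftrightarrow> (\<forall>a. absorbed R I {#a#} \<longrightarrow> a \<in> I)"
    if "z \<in> I"
    using sim_sub_absorbed[OF assms(1)] absorbed_sim_sub_zero[OF assms that] that by blast
  have zeros: "\<forall>e. is_zero R e \<longrightarrow> e \<in> I" if "\<forall>a. absorbed R I {#a#} \<longrightarrow> a \<in> I"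
    using that zero_absorbed by blast
  show ?thesis
    unfolding cond3_iff is_ideal_def using I3_iff zeros assms(2) by blast
qed

end
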